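(* For all $\theta,\theta'\in\Theta$, $$\|\pi^\rho_\theta\,d\lambda-\pi^\rho_{\theta'}\,d\lambda\|_{TV}\le 2(d-1)\sum_{i=1}^d\Big|1-\frac{\rho(\theta'(i))}{\rho(\theta(i))}\Big|.$$
   Context: Let $\mathsf X\subset\mathbb R^D$ be measurable, $\lambda$ a nonnegative reference measure, $\pi$ a probability density on $\mathsf X$ w.r.t. $\lambda$. $\mathsf X=\bigcup_{i=1}^d\mathsf X_i$ is a partition into disjoint measurable strata, $\theta_\star(i)=\int_{\mathsf X_i}\pi\,d\lambda$ (assumed positive), $\Theta=\{\theta\in(0,1)^d:\sum_i\theta(i)=1\}$. For a measurable $\rho:(0,1)\to(0,\infty)$ and $\theta\in\Theta$, $\pi^\rho_\theta(x)=(Z^\rho_\theta)^{-1}\sum_{i}\frac{\pi(x)}{\rho(\theta(i))}\mathbf 1_{\mathsf X_i}(x)$ with $Z^\rho_\theta=\sum_i\frac{\theta_\star(i)}{\rho(\theta(i))}$. For a signed measure $\nu$, $\|\nu\|_{TV}=\sup\{|\nu(f)|: f \text{ measurable},\ \sup_{\mathsf X}|f|\le1\}$. *)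

theory Defs
  imports "HOL-Analysis.Analysis"
begin

definition theta_star :: "'a measure \<Rightarrow> ('a \<Rightarrow> real) \<Rightarrow> (nat \<Rightarrow> 'a set) \<Rightarrow> nat \<Rightarrow> real" where
  "theta_star lam p S i = set_lebesgue_integral lam (S i) p"

definition Theta :: "nat \<Rightarrow> (nat \<Rightarrow> real) set" where
  "Theta d = {\<theta>. (\<forall>i\<in>{1..d}. 0 < \<theta> i \<and> \<theta> i < 1) \<and> (\<Sum>i=1..d. \<theta> i) = 1}"

definition Z_rho :: "'a measure \<Rightarrow> ('a \<Rightarrow> real) \<Rightarrow> (nat \<Rightarrow> 'a set) \<Rightarrow> nat
    \<Rightarrow> (real \<Rightarrow> real) \<Rightarrow> (nat \<Rightarrow> real) \<Rightarrow> real" where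
  "Z_rho lam p S d \<rho> \<theta> = (\<Sum>i=1..d. theta_star lam p S i / \<rho> (\<theta> i))"

definition pi_rho :: "'a measure \<Rightarrow> ('a \<Rightarrow> real) \<Rightarrow> (nat \<Rightarrow> 'a set) \<Rightarrow> nat
    \<Rightarrow> (real \<Rightarrow> real) \<Rightarrow> (nat \<Rightarrow> real) \<Rightarrow> 'a \<Rightarrow> real" where
  "pi_rho lam p S d \<rho> \<theta> x =
     inverse (Z_rho lam p S d \<rho> \<theta>) * (\<Sum>i=1..d. p x / \<rho> (\<theta> i) * indicator (S i) x)"

text \<open>Total variation norm of the signed measure (q1 d lam - q2 d lam):
  sup of |nu(f)| over measurable f with sup |f| <= 1.\<close>
definition tv_norm_diff :: "'a measure \<Rightarrow> ('a \<Rightarrow> real) \<Rightarrow> ('a \<Rightarrow> real) \<Rightarrow> real" where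
  "tv_norm_diff lam q1 q2 =
     (SUP f \<in> {f. f \<in> borel_measurable lam \<and> (\<forall>x\<in>space lam. \<bar>f x\<bar> \<le> 1)}.
        \<bar>(\<integral>x. f x * q1 x \<partial>lam) - (\<integral>x. f x * q2 x \<partial>lam)\<bar>)"

end

theory Submission
  imports Defs
begin

text \<open>Write \<open>a\<^sub>i = \<theta>\<^sub>\<star>(i)\<close>, \<open>r\<^sub>i = \<rho>(\<theta>(i))\<close>, \<open>s\<^sub>i = \<rho>(\<theta>'(i))\<close> and
  \<open>c\<^sub>i = 1/(Z r\<^sub>i)\<close>, \<open>c'\<^sub>i = 1/(Z' s\<^sub>i)\<close>. Both densities are of the form \<open>\<Sum>\<^sub>i c\<^sub>i p 1\<^bsub>S\<^sub>i\<^esub>\<close>, so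
  testing against \<open>|f| \<le> 1\<close> bounds the total variation by \<open>\<Sum>\<^sub>i a\<^sub>i |c\<^sub>i - c'\<^sub>i|\<close>.
  Expanding \<open>Z = \<Sum>\<^sub>j a\<^sub>j/r\<^sub>j\<close> and \<open>Z' = \<Sum>\<^sub>j a\<^sub>j/s\<^sub>j\<close> gives \<open>a\<^sub>i (c\<^sub>i - c'\<^sub>i) = \<Sum>\<^sub>j D\<^sub>i\<^sub>j\<close>
  with \<open>D\<^sub>i\<^sub>j = a\<^sub>i a\<^sub>j (1/(r\<^sub>i s\<^sub>j) - 1/(s\<^sub>i r\<^sub>j)) / (Z Z')\<close>, so \<open>D\<^sub>i\<^sub>i = 0\<close>, and
  \<open>|D\<^sub>i\<^sub>j| \<le> E\<^sub>i + E\<^sub>j\<close>, where \<open>E\<^sub>i = |1 - s\<^sub>i/r\<^sub>i|\<close>; summing over the \<open>d(d-1)\<close>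
  off-diagonal pairs gives \<open>2(d-1) \<Sum>\<^sub>i E\<^sub>i\<close>.\<close>

lemma diff_le_mult_abs_one_minus:
  fixes x y :: real
  assumes "0 < y" "y \<le> x"
  shows "x - y \<le> x * (\<bar>1 - x\<bar> + \<bar>1 - y\<bar>)"
proof (cases "x \<le> 1")
  case True
  then have "x - y \<le> x * (1 - y)" using assms by (simp add: algebra_simps mult_left_le)
  also have "\<dots> \<le> x * (\<bar>1 - x\<bar> + \<bar>1 - y\<bar>)" using assms by (intro mult_left_mono) auto
  finally show ?thesis .
next
  case False
  then have "x - y \<le> (x - 1) + \<bar>1 - y\<bar>" by auto
  also have "\<dots> \<le> x * (\<bar>1 - x\<bar> + \<bar>1 - y\<bar>)" using False
    by (smt (verit, best) mult_le_cancel_right1 abs_ge_zero distrib_left)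
  finally show ?thesis .
qed

lemma diff_le_of_cross_ratio:
  fixes P Q x y M :: real
  assumes "0 < y" "y \<le> x" "0 \<le> P" "P \<le> M" "P * y = Q * x"
  shows "\<bar>P - Q\<bar> \<le> M * (\<bar>1 - x\<bar> + \<bar>1 - y\<bar>)"
proof -
  have PQ: "P - Q = P * ((x - y) / x)" using assms by (simp add: field_simps)
  have "(x - y) / x \<le> \<bar>1 - x\<bar> + \<bar>1 - y\<bar>"
    using diff_le_mult_abs_one_minus[OF assms(1,2)] assms by (simp add: divide_le_eq mult.commute)
  then have "P * ((x - y) / x) \<le> M * (\<bar>1 - x\<bar> + \<bar>1 - y\<bar>)"
    using assms by (intro mult_mono) auto
  moreover have "0 \<le> P * ((x - y) / x)" using assms by simp
  ultimately show ?thesis unfolding PQ by simp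
qed

lemma abs_diff_le_of_cross_ratio:
  fixes P Q x y M :: real
  assumes "0 < x" "0 < y" "0 \<le> P" "0 \<le> Q" "P \<le> M" "Q \<le> M" "P * y = Q * x"
  shows "\<bar>P - Q\<bar> \<le> M * (\<bar>1 - x\<bar> + \<bar>1 - y\<bar>)"
proof (cases "y \<le> x")
  case True
  then show ?thesis using diff_le_of_cross_ratio assms by blast
next
  case False
  then have "\<bar>Q - P\<bar> \<le> M * (\<bar>1 - y\<bar> + \<bar>1 - x\<bar>)"
    using diff_le_of_cross_ratio[of x y Q M P] assms by (simp add: mult.commute)
  then show ?thesis by (simp add: abs_minus_commute add.commute)
qed

lemma cross_term_bound:
  fixes ai aj ri rj si sj Z Z' :: real
  assumes pos: "0 < ai" "0 < aj" "0 < ri" "0 < rj" "0 < si" "0 < sj"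
    and le_Z: "ai / ri \<le> Z" "aj / rj \<le> Z" "ai / si \<le> Z'" "aj / sj \<le> Z'"
  shows "\<bar>ai * aj / (Z * Z') * (1 / (ri * sj) - 1 / (si * rj))\<bar>
         \<le> \<bar>1 - si / ri\<bar> + \<bar>1 - sj / rj\<bar>"
proof -
  define P where "P = (ai / ri) * (aj / sj)"
  define Q where "Q = (aj / rj) * (ai / si)"
  have Z_pos: "0 < Z" "0 < Z'" using le_Z pos by (smt (verit) divide_pos_pos)+
  have "P \<le> Z * Z'" "Q \<le> Z * Z'" unfolding P_def Q_def
    using le_Z pos Z_pos by (intro mult_mono; simp)+
  moreover have "P * (sj / rj) = Q * (si / ri)" using pos by (simp add: P_def Q_def field_simps)
  ultimately have "\<bar>P - Q\<bar> \<le> Z * Z' * (\<bar>1 - si / ri\<bar> + \<bar>1 - sj / rj\<bar>)"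
    using pos by (intro abs_diff_le_of_cross_ratio) (auto simp: P_def Q_def)
  moreover have "ai * aj / (Z * Z') * (1 / (ri * sj) - 1 / (si * rj)) = (P - Q) / (Z * Z')"
    using pos by (simp add: P_def Q_def field_simps)
  ultimately show ?thesis using Z_pos by (simp add: divide_le_eq abs_divide mult.commute)
qed

lemma normalized_weights_diff_bound:
  fixes a r s :: "'i \<Rightarrow> real" and I :: "'i set"
  assumes fin: "finite I" and pos: "\<And>i. i \<in> I \<Longrightarrow> 0 < a i \<and> 0 < r i \<and> 0 < s i"
  defines "Z \<equiv> (\<Sum>j\<in>I. a j / r j)" and "Z' \<equiv> (\<Sum>j\<in>I. a j / s j)"
  shows "(\<Sum>i\<in>I. a i * \<bar>inverse Z / r i - inverse Z' / s i\<bar>)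
     \<le> 2 * (real (card I) - 1) * (\<Sum>i\<in>I. \<bar>1 - s i / r i\<bar>)"
proof -
  define E where "E i = \<bar>1 - s i / r i\<bar>" for i
  define D where "D i j = a i * a j / (Z * Z') * (1 / (r i * s j) - 1 / (s i * r j))" for i j
  have le_Z: "a i / r i \<le> Z" "a i / s i \<le> Z'" if "i \<in> I" for i
    unfolding Z_def Z'_def using that pos fin
    by (auto intro!: member_le_sum simp: less_imp_le)
  have Z_pos: "0 < Z" "0 < Z'" if "i \<in> I" for i using le_Z[OF that] pos[OF that]
    by (smt (verit) divide_pos_pos)+
  have D_le: "\<bar>D i j\<bar> \<le> E i + E j" if "i \<in> I" "j \<in> I" for i j
    unfolding D_def E_def
    using cross_term_bound pos[OF that(1)] pos[OF that(2)] le_Z[OF that(1)] le_Z[OF that(2)]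
    by blast
  have D_diag: "D i i = 0" for i by (simp add: D_def mult.commute)
  have row_eq: "a i * (inverse Z / r i - inverse Z' / s i) = (\<Sum>j\<in>I. D i j)" if i: "i \<in> I" for i
  proof -
    have "(\<Sum>j\<in>I. D i j)
        = (\<Sum>j\<in>I. a i / (Z * Z' * r i) * (a j / s j) - a i / (Z * Z' * s i) * (a j / r j))"
      by (rule sum.cong) (use pos i Z_pos[OF i] in \<open>auto simp: D_def field_simps\<close>)
    also have "\<dots> = a i / (Z * Z' * r i) * Z' - a i / (Z * Z' * s i) * Z"
      by (simp add: sum_subtractf sum_distrib_left Z_def Z'_def)
    also have "\<dots> = a i * (inverse Z / r i - inverse Z' / s i)"
      using Z_pos[OF i] pos[OF i] by (simp add: field_simps)
    finally show ?thesis by simp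
  qed
  have row_le: "a i * \<bar>inverse Z / r i - inverse Z' / s i\<bar>
      \<le> (real (card I) - 1) * E i + ((\<Sum>j\<in>I. E j) - E i)" if i: "i \<in> I" for i
  proof -
    have "a i * \<bar>inverse Z / r i - inverse Z' / s i\<bar> = \<bar>\<Sum>j\<in>I. D i j\<bar>"
      using row_eq[OF i] pos[OF i] by (metis abs_mult abs_of_pos)
    also have "\<dots> = \<bar>\<Sum>j\<in>I - {i}. D i j\<bar>"
      using fin i D_diag by (simp add: sum.remove)
    also have "\<dots> \<le> (\<Sum>j\<in>I - {i}. E i + E j)"
      using D_le i by (intro order.trans[OF sum_abs] sum_mono) auto
    also have "\<dots> = (real (card I) - 1) * E i + ((\<Sum>j\<in>I. E j) - E i)"
    proof -
      have "1 \<le> card I" using fin i by (metis One_nat_def Suc_leI card_gt_0_iff empty_iff)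
      then show ?thesis using fin i by (simp add: sum.distrib sum_diff1 of_nat_diff)
    qed
    finally show ?thesis .
  qed
  have "(\<Sum>i\<in>I. a i * \<bar>inverse Z / r i - inverse Z' / s i\<bar>)
      \<le> (\<Sum>i\<in>I. (real (card I) - 1) * E i + ((\<Sum>j\<in>I. E j) - E i))"
    by (rule sum_mono) (rule row_le)
  also have "\<dots> = 2 * (real (card I) - 1) * (\<Sum>i\<in>I. E i)"
    by (simp add: sum.distrib sum_subtractf sum_distrib_left sum_distrib_right[symmetric]
        algebra_simps)
  finally show ?thesis unfolding E_def .
qed

lemma integrable_bounded_mult_restrict:
  fixes p f :: "'a \<Rightarrow> real"
  assumes "integrable lam p" "S \<in> sets lam"
    and "f \<in> borel_measurable lam" "\<forall>x\<in>space lam. \<bar>f x\<bar> \<le> 1"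
  shows "integrable lam (\<lambda>x. f x * (p x * indicator S x))"
proof (rule Bochner_Integration.integrable_bound[OF assms(1)])
  show "(\<lambda>x. f x * (p x * indicator S x)) \<in> borel_measurable lam"
    using assms by measurable
  show "AE x in lam. norm (f x * (p x * indicator S x)) \<le> norm (p x)"
    using assms(4) by (auto simp: abs_mult indicator_def intro!: mult_left_le_one_le)
qed

lemma abs_integral_bounded_mult_restrict_le:
  fixes p f :: "'a \<Rightarrow> real"
  assumes "integrable lam p" "\<forall>x\<in>space lam. 0 \<le> p x" "S \<in> sets lam"
    and "f \<in> borel_measurable lam" "\<forall>x\<in>space lam. \<bar>f x\<bar> \<le> 1"
  shows "\<bar>\<integral>x. f x * (p x * indicator S x) \<partial>lam\<bar> \<le> (\<integral>x. p x * indicator S x \<partial>lam)"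
proof -
  have "\<bar>\<integral>x. f x * (p x * indicator S x) \<partial>lam\<bar> \<le> (\<integral>x. \<bar>f x * (p x * indicator S x)\<bar> \<partial>lam)"
    by (rule integral_abs_bound)
  also have "\<dots> \<le> (\<integral>x. p x * indicator S x \<partial>lam)"
    using assms
    by (intro integral_mono integrable_abs integrable_bounded_mult_restrict
        integrable_real_mult_indicator)
      (auto simp: abs_mult indicator_def intro!: mult_left_le_one_le)
  finally show ?thesis .
qed

lemma integral_mult_stratified:
  fixes p f :: "'a \<Rightarrow> real" and S :: "'i \<Rightarrow> 'a set" and c :: "'i \<Rightarrow> real"
  assumes "finite I" "integrable lam p" "\<And>i. i \<in> I \<Longrightarrow> S i \<in> sets lam"
    and "f \<in> borel_measurable lam" "\<forall>x\<in>space lam. \<bar>f x\<bar> \<le> 1"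
  shows "(\<integral>x. f x * (\<Sum>i\<in>I. c i * (p x * indicator (S i) x)) \<partial>lam)
       = (\<Sum>i\<in>I. c i * (\<integral>x. f x * (p x * indicator (S i) x) \<partial>lam))"
proof -
  have "(\<integral>x. f x * (\<Sum>i\<in>I. c i * (p x * indicator (S i) x)) \<partial>lam)
      = (\<integral>x. (\<Sum>i\<in>I. c i * (f x * (p x * indicator (S i) x))) \<partial>lam)"
    by (simp add: sum_distrib_left algebra_simps)
  also have "\<dots> = (\<Sum>i\<in>I. (\<integral>x. c i * (f x * (p x * indicator (S i) x)) \<partial>lam))"
    using integrable_bounded_mult_restrict[OF assms(2,3) assms(4,5)]
    by (intro Bochner_Integration.integral_sum integrable_mult_right) blast
  finally show ?thesis by simp
qed

lemma tv_norm_diff_stratified_le: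
  fixes p :: "'a \<Rightarrow> real" and S :: "'i \<Rightarrow> 'a set" and c c' :: "'i \<Rightarrow> real"
  assumes fin: "finite I" and p_int: "integrable lam p" and p_nonneg: "\<forall>x\<in>space lam. 0 \<le> p x"
    and S_meas: "\<And>i. i \<in> I \<Longrightarrow> S i \<in> sets lam"
  shows "tv_norm_diff lam (\<lambda>x. \<Sum>i\<in>I. c i * (p x * indicator (S i) x))
                          (\<lambda>x. \<Sum>i\<in>I. c' i * (p x * indicator (S i) x))
         \<le> (\<Sum>i\<in>I. (\<integral>x. p x * indicator (S i) x \<partial>lam) * \<bar>c i - c' i\<bar>)"
  unfolding tv_norm_diff_def
proof (rule cSUP_least)
  have "(\<lambda>_. 0) \<in> {f :: 'a \<Rightarrow> real. f \<in> borel_measurable lam \<and> (\<forall>x\<in>space lam. \<bar>f x\<bar> \<le> 1)}"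
    by simp
  then show "{f :: 'a \<Rightarrow> real. f \<in> borel_measurable lam \<and> (\<forall>x\<in>space lam. \<bar>f x\<bar> \<le> 1)} \<noteq> {}"
    by blast
next
  fix f :: "'a \<Rightarrow> real" assume "f \<in> {f. f \<in> borel_measurable lam \<and> (\<forall>x\<in>space lam. \<bar>f x\<bar> \<le> 1)}"
  then have f: "f \<in> borel_measurable lam" "\<forall>x\<in>space lam. \<bar>f x\<bar> \<le> 1" by auto
  define g where "g i = (\<integral>x. f x * (p x * indicator (S i) x) \<partial>lam)" for i
  define a where "a i = (\<integral>x. p x * indicator (S i) x \<partial>lam)" for i
  have g_le: "\<bar>g i\<bar> \<le> a i" if "i \<in> I" for i
    unfolding g_def a_def
    using abs_integral_bounded_mult_restrict_le[OF p_int p_nonneg S_meas[OF that] f] .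
  have "\<bar>(\<Sum>i\<in>I. c i * g i) - (\<Sum>i\<in>I. c' i * g i)\<bar> = \<bar>\<Sum>i\<in>I. (c i - c' i) * g i\<bar>"
    by (simp add: sum_subtractf left_diff_distrib)
  also have "\<dots> \<le> (\<Sum>i\<in>I. \<bar>(c i - c' i) * g i\<bar>)"
    by (rule sum_abs)
  also have "\<dots> \<le> (\<Sum>i\<in>I. a i * \<bar>c i - c' i\<bar>)"
  proof (rule sum_mono)
    fix i assume "i \<in> I"
    then have "\<bar>c i - c' i\<bar> * \<bar>g i\<bar> \<le> \<bar>c i - c' i\<bar> * a i"
      using g_le by (intro mult_left_mono) auto
    then show "\<bar>(c i - c' i) * g i\<bar> \<le> a i * \<bar>c i - c' i\<bar>"
      by (simp only: abs_mult mult.commute)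
  qed
  finally show "\<bar>(\<integral>x. f x * (\<Sum>i\<in>I. c i * (p x * indicator (S i) x)) \<partial>lam)
      - (\<integral>x. f x * (\<Sum>i\<in>I. c' i * (p x * indicator (S i) x)) \<partial>lam)\<bar>
      \<le> (\<Sum>i\<in>I. (\<integral>x. p x * indicator (S i) x \<partial>lam) * \<bar>c i - c' i\<bar>)"
    using integral_mult_stratified[OF fin p_int S_meas f] by (simp add: g_def a_def)
qed

lemma theta_star_eq_integral:
  "theta_star lam p S i = (\<integral>x. p x * indicator (S i) x \<partial>lam)"
  by (simp add: theta_star_def set_lebesgue_integral_def mult.commute)

lemma pi_rho_eq_stratified:
  "pi_rho lam p S d \<rho> \<theta> = (\<lambda>x. \<Sum>i=1..d.
     inverse (Z_rho lam p S d \<rho> \<theta>) / \<rho> (\<theta> i) * (p x * indicator (S i) x))"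
  by (simp add: fun_eq_iff pi_rho_def sum_distrib_left)

theorem lemma6p2:
  fixes X :: "'a::euclidean_space set"
    and lam :: "'a measure"
    and p :: "'a \<Rightarrow> real"
    and S :: "nat \<Rightarrow> 'a set"
    and d :: nat
    and \<rho> :: "real \<Rightarrow> real"
    and \<theta> \<theta>' :: "nat \<Rightarrow> real"
  assumes X_meas: "X \<in> sets borel"
    and lam_space: "space lam = X"
    and lam_sets: "sets lam = sets (restrict_space borel X)"
    and p_meas: "p \<in> borel_measurable lam"
    and p_nonneg: "\<forall>x\<in>X. 0 \<le> p x"
    and p_prob: "(\<integral>\<^sup>+ x. ennreal (p x) \<partial>lam) = 1"
    and S_meas: "\<forall>i\<in>{1..d}. S i \<in> sets lam"
    and S_disj: "\<forall>i\<in>{1..d}. \<forall>j\<in>{1..d}. i \<noteq> j \<longrightarrow> S i \<inter> S j = {}"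
    and S_cover: "(\<Union>i\<in>{1..d}. S i) = X"
    and theta_star_pos: "\<forall>i\<in>{1..d}. 0 < theta_star lam p S i"
    and rho_meas: "\<rho> \<in> borel_measurable (restrict_space borel {0<..<1})"
    and rho_pos: "\<forall>t\<in>{0<..<1}. 0 < \<rho> t"
    and theta: "\<theta> \<in> Theta d"
    and theta': "\<theta>' \<in> Theta d"
  shows "tv_norm_diff lam (pi_rho lam p S d \<rho> \<theta>) (pi_rho lam p S d \<rho> \<theta>')
           \<le> 2 * (real d - 1) * (\<Sum>i=1..d. \<bar>1 - \<rho> (\<theta>' i) / \<rho> (\<theta> i)\<bar>)"
proof -
  have p_int: "integrable lam p"
    using p_meas p_nonneg p_prob lam_space by (intro integrableI_nonneg) auto
  have pos: "0 < theta_star lam p S i \<and> 0 < \<rho> (\<theta> i) \<and> 0 < \<rho> (\<theta>' i)" if "i \<in> {1..d}" for i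
    using that theta theta' theta_star_pos rho_pos by (auto simp: Theta_def)
  have "tv_norm_diff lam (pi_rho lam p S d \<rho> \<theta>) (pi_rho lam p S d \<rho> \<theta>')
      \<le> (\<Sum>i=1..d. theta_star lam p S i * \<bar>inverse (Z_rho lam p S d \<rho> \<theta>) / \<rho> (\<theta> i)
                                         - inverse (Z_rho lam p S d \<rho> \<theta>') / \<rho> (\<theta>' i)\<bar>)"
    unfolding pi_rho_eq_stratified theta_star_eq_integral
    using p_int p_nonneg lam_space S_meas by (intro tv_norm_diff_stratified_le) auto
  also have "\<dots> \<le> 2 * (real d - 1) * (\<Sum>i=1..d. \<bar>1 - \<rho> (\<theta>' i) / \<rho> (\<theta> i)\<bar>)"
    using normalized_weights_diff_bound[of "{1..d}" "theta_star lam p S" "\<lambda>i. \<rho> (\<theta> i)"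
        "\<lambda>i. \<rho> (\<theta>' i)"] pos
    by (simp add: Z_rho_def)
  finally show ?thesis .
qed

end
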